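(* Let $p_2\in H^2_\mathbb{C}$ be the unique fixed point of $G_2$. The indices $j\ge1$ such that $p_2\in\mathcal{B}_j$ are exactly $j\in\{1,2,3,5,10,11\}$. At $p_2$, any two and any three of the six differentials $df_1,df_2,df_3,df_5,df_{10},df_{11}$ are linearly independent, and among the four-element subsets of $\{1,2,3,5,10,11\}$ the only ones whose differentials at $p_2$ are linearly dependent (i.e. whose four bisectors do not meet transversely at $p_2$) are $\{1,2,3,10\}$, $\{1,2,5,11\}$ and $\{3,5,10,11\}$.
   Context: Hermitian form on $\mathbb{C}^3$: $\langle V,W\rangle=V_1\overline{W_3}+V_2\overline{W_2}+V_3\overline{W_1}$. Let $$G_1=\begin{pmatrix}1&1&-\frac{1+i\sqrt7}{2}\\0&1&-1\\0&0&1\end{pmatrix},\quad G_3=\begin{pmatrix}1&0&0\\-1&1&0\\ \frac{-1+i\sqrt7}{2}&1&1\end{pmatrix},\quad G_2=G_3G_1^{-1}G_3^{-1}G_1,$$ $Q=(1,0,0)^T$. Set $\gamma_1=G_2,\gamma_2=G_2^{-1},\gamma_3=G_3,\gamma_4=G_3^{-1}$ and, for $k\ge1$ and $1\le j\le4$, $\gamma_{8k-4+j}=G_1^k\gamma_jG_1^{-k}$, $\gamma_{8k+j}=G_1^{-k}\gamma_jG_1^{k}$ (so $\gamma_5=G_1G_2G_1^{-1}$, $\gamma_{10}=G_1^{-1}G_2^{-1}G_1$, $\gamma_{11}=G_1^{-1}G_3G_1$). For $Z\in\mathbb{C}^3\setminus\{0\}$, $f_j(Z)=|\langle Z,Q\rangle|^2-|\langle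 Z,\gamma_jQ\rangle|^2$, viewed on the affine chart $Z_3\ne0$ of $\mathbb{C}P^2\cong$ (locally) $\mathbb{R}^4$; $\mathcal{B}_j=\{[Z]: f_j(Z)=0,\ \langle Z,Z\rangle<0\}$. Differentials are real differentials at $p_2$. *)

theory Defs
  imports "HOL-Analysis.Analysis"
begin

definition herm :: "complex^3 \<Rightarrow> complex^3 \<Rightarrow> complex" where
  "herm V W = V$1 * cnj (W$3) + V$2 * cnj (W$2) + V$3 * cnj (W$1)"

definition G1 :: "complex^3^3" where
  "G1 = vector [vector [1, 1, - (1 + \<i> * complex_of_real (sqrt 7)) / 2],
                vector [0, 1, -1],
                vector [0, 0, 1]]"

definition G3 :: "complex^3^3" where
  "G3 = vector [vector [1, 0, 0],
                vector [-1, 1, 0],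
                vector [(-1 + \<i> * complex_of_real (sqrt 7)) / 2, 1, 1]]"

definition G2 :: "complex^3^3" where
  "G2 = G3 ** matrix_inv G1 ** matrix_inv G3 ** G1"

definition Qv :: "complex^3" where
  "Qv = vector [1, 0, 0]"

text \<open>Matrix power (the power operator on vec types is componentwise, so we define it).\<close>
primrec mpow :: "complex^3^3 \<Rightarrow> nat \<Rightarrow> complex^3^3" where
  "mpow M 0 = mat 1"
| "mpow M (Suc n) = M ** mpow M n"

definition gamma_base :: "nat \<Rightarrow> complex^3^3" where
  "gamma_base j = (if j = 1 then G2 else if j = 2 then matrix_inv G2
                   else if j = 3 then G3 else matrix_inv G3)"

text \<open>gamma n for n \<ge> 1: write n = 8k + j (j = 1..4, k \<ge> 0) giving G1^{-k} gamma_j G1^k,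
  or n = 8k - 4 + j (j = 1..4, k \<ge> 1) giving G1^k gamma_j G1^{-k}.
  For k = 0 the first case gives gamma_1..gamma_4. gamma 0 is junk (unused).\<close>
definition gamma :: "nat \<Rightarrow> complex^3^3" where
  "gamma n = (let r = (n - 1) mod 8; q = (n - 1) div 8 in
     if r < 4 then mpow (matrix_inv G1) q ** gamma_base (r + 1) ** mpow G1 q
     else mpow G1 (q + 1) ** gamma_base (r - 3) ** mpow (matrix_inv G1) (q + 1))"

definition fj :: "nat \<Rightarrow> complex^3 \<Rightarrow> real" where
  "fj j Z = (cmod (herm Z Qv))\<^sup>2 - (cmod (herm Z (gamma j *v Qv)))\<^sup>2"

definition lift :: "complex \<times> complex \<Rightarrow> complex^3" where
  "lift w = vector [fst w, snd w, 1]"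

text \<open>Complex hyperbolic plane in the chart (every negative vector has Z3 \<noteq> 0).\<close>
definition H2C :: "(complex \<times> complex) set" where
  "H2C = {w. Re (herm (lift w) (lift w)) < 0}"

definition proj_fixed :: "complex^3^3 \<Rightarrow> complex \<times> complex \<Rightarrow> bool" where
  "proj_fixed M w \<longleftrightarrow> (\<exists>c. M *v lift w = c *s lift w)"

definition bisector :: "nat \<Rightarrow> (complex \<times> complex) set" where
  "bisector j = {w. fj j (lift w) = 0 \<and> Re (herm (lift w) (lift w)) < 0}"

definition df :: "nat \<Rightarrow> complex \<times> complex \<Rightarrow> (complex \<times> complex \<Rightarrow> real)" where
  "df j p = frechet_derivative (\<lambda>w. fj j (lift w)) (at p)"

definition lin_indep_family :: "('i \<Rightarrow> 'v \<Rightarrow> real) \<Rightarrow> 'i set \<Rightarrow> bool" where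
  "lin_indep_family L S \<longleftrightarrow>
     (\<forall>c. (\<forall>v. (\<Sum>j\<in>S. c j * L j v) = 0) \<longrightarrow> (\<forall>j\<in>S. c j = 0))"

end

theory Submission
  imports Defs
begin

text \<open>
  Eliminating the eigenvalue from \<open>G2 Z = c Z\<close> in the chart leaves \<open>(x + 1)(x\<^sup>2 + 1) = 0\<close>
  for the first coordinate, and \<open>x = \<plusminus>\<i>\<close> gives no negative point; so the fixed point is
  \<open>p2 = [-1 : (3 + \<i>\<surd>7)/4 : 1]\<close>. Since \<open>\<langle>Z, Q\<rangle> = Z\<^sub>3\<close>, on the chart
  \<open>f\<^sub>j = 1 - |\<langle>Z, \<gamma>\<^sub>j Q\<rangle>|\<^sup>2\<close> is one minus the squared modulus of an affine function: hence
  \<open>p2 \<in> B\<^sub>j\<close> iff \<open>|\<langle>p2, \<gamma>\<^sub>j Q\<rangle>| = 1\<close>, and \<open>df\<^sub>j\<close> is explicit.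

  As \<open>G1\<close> fixes \<open>Q\<close>, every \<open>\<gamma>\<^sub>j Q\<close> is \<open>G1\<^sup>m \<gamma>\<^sub>r Q\<close> with \<open>r \<le> 4\<close> and \<open>m\<close> an integer, and
  \<open>|\<langle>p2, G1\<^sup>m \<gamma>\<^sub>r Q\<rangle>|\<^sup>2 - 1\<close> is \<open>m(m \<mp> 1)\<close> times a positive quadratic for \<open>r \<le> 3\<close> and is
  positive for \<open>r = 4\<close>; this singles out \<open>j \<in> {1, 2, 3, 5, 10, 11}\<close>. On a real frame of the
  chart the six differentials form a rational \<open>6 \<times> 4\<close> matrix. Every pair and triple of indices
  lies in one of twelve quadruples with independent differentials, while the remaining three
  quadruples satisfy \<open>df\<^sub>1 + df\<^sub>2 = df\<^sub>3 + df\<^sub>1\<^sub>0 = df\<^sub>5 + df\<^sub>1\<^sub>1\<close>.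
\<close>

section \<open>Linear independence of families of functionals\<close>

lemma lin_indep_family_subset:
  assumes "lin_indep_family L S" "T \<subseteq> S" "finite S"
  shows "lin_indep_family L T"
  unfolding lin_indep_family_def
proof (intro allI impI ballI)
  fix c j
  assume T_rel: "\<forall>v. (\<Sum>i\<in>T. c i * L i v) = 0" and "j \<in> T"
  define c' where "c' i = (if i \<in> T then c i else 0)" for i
  have "(\<Sum>i\<in>S. c' i * L i v) = (\<Sum>i\<in>T. c i * L i v)" for v
  proof -
    have "(\<Sum>i\<in>S. c' i * L i v) = (\<Sum>i\<in>T. c' i * L i v)"
      using assms(2,3) by (intro sum.mono_neutral_right) (auto simp: c'_def)
    then show ?thesis
      by (simp add: c'_def)
  qed
  then have "\<forall>i\<in>S. c' i = 0"
    using assms(1) T_rel unfolding lin_indep_family_def by simp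
  then have "c' j = 0"
    using \<open>j \<in> T\<close> assms(2) by blast
  then show "c j = 0"
    using \<open>j \<in> T\<close> by (simp add: c'_def)
qed

lemma lin_indep_family_iff_frame:
  assumes "\<And>j v. j \<in> S \<Longrightarrow> L j v = (\<Sum>k\<in>K. a k v * L j (b k))"
  shows "lin_indep_family L S \<longleftrightarrow>
    (\<forall>c. (\<forall>k\<in>K. (\<Sum>j\<in>S. c j * L j (b k)) = 0) \<longrightarrow> (\<forall>j\<in>S. c j = 0))"
proof -
  have expand: "(\<Sum>j\<in>S. c j * L j v) = (\<Sum>k\<in>K. a k v * (\<Sum>j\<in>S. c j * L j (b k)))" for c v
  proof -
    have "(\<Sum>j\<in>S. c j * L j v) = (\<Sum>j\<in>S. c j * (\<Sum>k\<in>K. a k v * L j (b k)))"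
      by (rule sum.cong[OF refl], subst assms) auto
    also have "\<dots> = (\<Sum>k\<in>K. \<Sum>j\<in>S. c j * (a k v * L j (b k)))"
      by (simp only: sum_distrib_left sum.swap[of _ K])
    also have "\<dots> = (\<Sum>k\<in>K. a k v * (\<Sum>j\<in>S. c j * L j (b k)))"
      by (simp only: sum_distrib_left mult.left_commute)
    finally show ?thesis .
  qed
  show ?thesis
    unfolding lin_indep_family_def
  proof (intro iffI allI impI)
    fix c
    assume indep: "\<forall>c. (\<forall>v. (\<Sum>j\<in>S. c j * L j v) = 0) \<longrightarrow> (\<forall>j\<in>S. c j = 0)"
      and frame: "\<forall>k\<in>K. (\<Sum>j\<in>S. c j * L j (b k)) = 0"
    have "(\<Sum>j\<in>S. c j * L j v) = 0" for v
      unfolding expand[of c v] using frame by (intro sum.neutral) simp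
    then show "\<forall>j\<in>S. c j = 0"
      using indep by blast
  next
    fix c
    assume "\<forall>c. (\<forall>k\<in>K. (\<Sum>j\<in>S. c j * L j (b k)) = 0) \<longrightarrow> (\<forall>j\<in>S. c j = 0)"
      and "\<forall>v. (\<Sum>j\<in>S. c j * L j v) = 0"
    then show "\<forall>j\<in>S. c j = 0"
      by blast
  qed
qed

definition mat3 :: "'a::zero \<Rightarrow> 'a \<Rightarrow> 'a \<Rightarrow> 'a \<Rightarrow> 'a \<Rightarrow> 'a \<Rightarrow> 'a \<Rightarrow> 'a \<Rightarrow> 'a \<Rightarrow> 'a^3^3" where
  "mat3 a b c d e f g h i = vector [vector [a, b, c], vector [d, e, f], vector [g, h, i]]"

lemma mat3_mult:
  fixes a :: "'a::semiring_1"
  shows "mat3 a b c d e f g h i ** mat3 a' b' c' d' e' f' g' h' i' =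
    mat3 (a*a' + b*d' + c*g') (a*b' + b*e' + c*h') (a*c' + b*f' + c*i')
         (d*a' + e*d' + f*g') (d*b' + e*e' + f*h') (d*c' + e*f' + f*i')
         (g*a' + h*d' + i*g') (g*b' + h*e' + i*h') (g*c' + h*f' + i*i')"
  by (simp add: mat3_def matrix_matrix_mult_def vec_eq_iff forall_3 sum_3)

lemma mat3_vector_mult:
  fixes a :: "'a::semiring_1"
  shows "mat3 a b c d e f g h i *v vector [x, y, z] =
    vector [a*x + b*y + c*z, d*x + e*y + f*z, g*x + h*y + i*z]"
  by (simp add: mat3_def matrix_vector_mult_def vec_eq_iff forall_3 sum_3)

lemma mat_one_mat3: "mat 1 = (mat3 1 0 0 0 1 0 0 0 1 :: 'a::semiring_1^3^3)"
  by (simp add: mat3_def mat_def vec_eq_iff forall_3)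

lemma mat3_eq_iff:
  "mat3 a b c d e f g h i = mat3 a' b' c' d' e' f' g' h' i' \<longleftrightarrow>
   a = a' \<and> b = b' \<and> c = c' \<and> d = d' \<and> e = e' \<and> f = f' \<and> g = g' \<and> h = h' \<and> i = i'"
  by (simp add: mat3_def vec_eq_iff forall_3)

lemma vector3_eq_iff: "(vector [a, b, c] :: 'a::zero^3) = vector [a', b', c'] \<longleftrightarrow> a = a' \<and> b = b' \<and> c = c'"
  by (simp add: vec_eq_iff forall_3)

lemma vector3_scalar_mult: "c *s (vector [a, b, d] :: 'a::semiring_1^3) = vector [c*a, c*b, c*d]"
  by (simp add: vec_eq_iff forall_3)

lemma matrix_inv_eqI:
  fixes A B :: "'a::semiring_1^'n^'n"
  assumes "A ** B = mat 1" "B ** A = mat 1"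
  shows "matrix_inv A = B"
proof -
  have inv: "matrix_inv A ** A = mat 1"
    unfolding matrix_inv_def using someI_ex[of "\<lambda>B. A ** B = mat 1 \<and> B ** A = mat 1"] assms by blast
  have "matrix_inv A = matrix_inv A ** (A ** B)"
    using assms(1) by simp
  also have "\<dots> = B"
    by (simp add: matrix_mul_assoc inv)
  finally show ?thesis .
qed

definition sqrt_neg7 :: complex where
  "sqrt_neg7 = \<i> * complex_of_real (sqrt 7)"

lemma Re_sqrt_neg7 [simp]: "Re sqrt_neg7 = 0"
  and Im_sqrt_neg7 [simp]: "Im sqrt_neg7 = sqrt 7"
  and cnj_sqrt_neg7 [simp]: "cnj sqrt_neg7 = - sqrt_neg7"
  by (simp_all add: sqrt_neg7_def complex_eq_iff)

lemma sqrt_neg7_squared: "sqrt_neg7 * sqrt_neg7 = -7"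
  and sqrt_neg7_squared_left: "sqrt_neg7 * (sqrt_neg7 * x) = -7 * x"
  by (simp_all add: sqrt_neg7_def complex_eq_iff)

lemma G1_mat3: "G1 = mat3 1 1 (- (1 + sqrt_neg7) / 2) 0 1 (-1) 0 0 1"
  by (simp add: G1_def mat3_def sqrt_neg7_def)

lemma G3_mat3: "G3 = mat3 1 0 0 (-1) 1 0 ((-1 + sqrt_neg7) / 2) 1 1"
  by (simp add: G3_def mat3_def sqrt_neg7_def)

lemma G3_inverse: "matrix_inv G3 = mat3 1 0 0 1 1 0 (- (1 + sqrt_neg7) / 2) (-1) 1"
  by (rule matrix_inv_eqI) (simp_all add: G3_mat3 mat3_mult mat_one_mat3 mat3_eq_iff field_simps)

text \<open>\<open>G1\<close> is a Heisenberg translation; \<open>G1_power\<close> is the one-parameter group through it,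
  with \<open>G1\<^sup>k = G1_power k\<close> for all integers \<open>k\<close>.\<close>
definition G1_power :: "complex \<Rightarrow> complex^3^3" where
  "G1_power z = mat3 1 z (- z * (1 + sqrt_neg7) / 2 - z * (z - 1) / 2) 0 1 (- z) 0 0 1"

lemma G1_power_add: "G1_power a ** G1_power b = G1_power (a + b)"
  by (simp add: G1_power_def mat3_mult mat3_eq_iff field_simps)

lemma G1_power_0: "G1_power 0 = mat 1"
  by (simp add: G1_power_def mat_one_mat3)

lemma G1_eq_G1_power: "G1 = G1_power 1"
  by (simp add: G1_mat3 G1_power_def)

lemma G1_inverse: "matrix_inv G1 = G1_power (-1)"
  by (rule matrix_inv_eqI) (simp_all add: G1_eq_G1_power G1_power_add G1_power_0)

lemma mpow_G1_power: "mpow (G1_power z) k = G1_power (of_nat k * z)"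
  by (induction k) (simp_all add: G1_power_0 G1_power_add algebra_simps)

lemma G1_power_Qv: "G1_power z *v Qv = Qv"
  by (simp add: G1_power_def Qv_def mat3_vector_mult)

lemma G2_mat3: "G2 = mat3 2 ((3 - sqrt_neg7) / 2) (-1) (- (3 + sqrt_neg7) / 2) (-1) 0 (-1) 0 0"
  unfolding G2_def G1_inverse G3_inverse
  unfolding G1_power_def G1_mat3 G3_mat3 mat3_mult mat3_eq_iff
  by (simp add: field_simps sqrt_neg7_squared sqrt_neg7_squared_left)

lemma G2_inverse: "matrix_inv G2 = mat3 0 0 (-1) 0 (-1) ((3 + sqrt_neg7) / 2) (-1) ((-3 + sqrt_neg7) / 2) 2"
  unfolding G2_mat3 by (rule matrix_inv_eqI)
    (simp_all add: mat3_mult mat_one_mat3 mat3_eq_iff field_simps sqrt_neg7_squared sqrt_neg7_squared_left)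

lemma mpow_G1: "mpow G1 k = G1_power (of_nat k)"
  by (simp add: G1_eq_G1_power mpow_G1_power)

lemma mpow_G1_inverse: "mpow (matrix_inv G1) k = G1_power (- of_nat k)"
  by (simp add: G1_inverse mpow_G1_power)

lemma gamma_Qv:
  "gamma j *v Qv = (if (j - 1) mod 8 < 4
     then G1_power (- of_nat ((j - 1) div 8)) *v (gamma_base ((j - 1) mod 8 + 1) *v Qv)
     else G1_power (of_nat ((j - 1) div 8 + 1)) *v (gamma_base ((j - 1) mod 8 - 3) *v Qv))"
  unfolding gamma_def Let_def mpow_G1 mpow_G1_inverse
  by (simp add: matrix_vector_mul_assoc[symmetric] G1_power_Qv)

lemma gamma_base_Qv:
  "gamma_base r *v Qv = (if r = 1 then vector [2, - (3 + sqrt_neg7) / 2, -1]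
     else if r = 2 then vector [0, 0, -1]
     else if r = 3 then vector [1, -1, (-1 + sqrt_neg7) / 2]
     else vector [1, 1, - (1 + sqrt_neg7) / 2])"
  unfolding gamma_base_def G2_inverse G3_inverse
  by (simp add: G2_mat3 G3_mat3 Qv_def mat3_vector_mult)

section \<open>The fixed point of \<open>G2\<close> and the bisectors through it\<close>

definition p2 :: "complex \<times> complex" where
  "p2 = (-1, (3 + sqrt_neg7) / 4)"

lemma herm_vector3: "herm (vector [a, b, c]) (vector [x, y, z]) = a * cnj z + b * cnj y + c * cnj x"
  by (simp add: herm_def)

lemma herm_lift_Qv: "herm (lift w) Qv = 1"
  by (simp add: herm_def lift_def Qv_def)

lemma herm_lift_lift: "Re (herm (lift w) (lift w)) = 2 * Re (fst w) + (cmod (snd w))\<^sup>2"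
  by (simp add: herm_def lift_def cmod_def power2_eq_square)

lemma p2_in_H2C: "p2 \<in> H2C"
  unfolding H2C_def mem_Collect_eq herm_lift_lift p2_def
  by (simp add: cmod_def power2_eq_square field_simps)

lemma p2_fixed: "proj_fixed G2 p2"
  unfolding proj_fixed_def
  by (rule exI[of _ 1])
    (simp add: G2_mat3 lift_def p2_def mat3_vector_mult vector3_eq_iff field_simps
      sqrt_neg7_squared sqrt_neg7_squared_left)

lemma proj_fixed_G2_H2C_unique:
  assumes "w \<in> H2C" "proj_fixed G2 w"
  shows "w = p2"
proof -
  obtain c where c: "G2 *v lift w = c *s lift w"
    using assms(2) unfolding proj_fixed_def by blast
  obtain x y where w: "w = (x, y)"
    by (cases w)
  from c have E1: "2*x + (3 - sqrt_neg7)/2 * y - 1 = c*x"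
    and E2: "- (3 + sqrt_neg7)/2 * x - y = c*y" and E3: "- x = c"
    unfolding G2_mat3 lift_def w mat3_vector_mult vector3_scalar_mult vector3_eq_iff
    by (simp_all add: algebra_simps)
  have "(x + 1) * ((x - \<i>) * (x + \<i>)) = 0"
  proof -
    have "4*x + (3 - sqrt_neg7)*y - 2 + 2*x*x = 0" "- (3 + sqrt_neg7)*x - 2*y + 2*x*y = 0"
      using E1 E2 E3[symmetric] by (simp_all add: field_simps)
    then have "(x + 1) * (x * x + 1) = 0"
      using sqrt_neg7_squared by algebra
    then show ?thesis
      by (simp add: algebra_simps)
  qed
  moreover have "x \<noteq> \<i>" "x \<noteq> - \<i>"
    using assms(1) unfolding H2C_def herm_lift_lift w by auto
  ultimately have x: "x = -1"
    by (auto simp: add_eq_0_iff2)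
  then have "y = (3 + sqrt_neg7) / 4"
    using E2 E3[symmetric] by (simp add: field_simps)
  then show ?thesis
    unfolding w p2_def x by simp
qed

definition p2_pairing :: "nat \<Rightarrow> real \<Rightarrow> complex" where
  "p2_pairing r m = herm (lift p2) (G1_power (of_real m) *v (gamma_base r *v Qv))"

lemma herm_p2_gamma_Qv:
  "herm (lift p2) (gamma j *v Qv) = (if (j - 1) mod 8 < 4
     then p2_pairing ((j - 1) mod 8 + 1) (- real ((j - 1) div 8))
     else p2_pairing ((j - 1) mod 8 - 3) (real ((j - 1) div 8) + 1))"
  unfolding gamma_Qv p2_pairing_def by (simp add: add.commute)

lemma p2_pairing_eq:
  "p2_pairing 1 m = Complex (1 - 3*m/4 + m\<^sup>2/2) (sqrt 7 * m / 4)"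
  "p2_pairing 2 m = Complex (1 + 3*m/4 + m\<^sup>2/2) (- sqrt 7 * m / 4)"
  "p2_pairing 3 m = Complex ((3 + m + m\<^sup>2) / 4) (sqrt 7 * (1 + m + m\<^sup>2) / 4)"
  "p2_pairing 4 m = Complex (9/4 + m/2 + m\<^sup>2/4) (- sqrt 7 * (1/4 + m/2 + m\<^sup>2/4))"
  by (simp_all add: p2_pairing_def gamma_base_Qv p2_def lift_def G1_power_def mat3_vector_mult herm_vector3
      complex_eq_iff field_simps power2_eq_square)

lemma norm_p2_pairing_squared:
  "(cmod (p2_pairing 1 m))\<^sup>2 = 1 + m * (m - 1) * ((m - 1)\<^sup>2 + 5) / 4"
  "(cmod (p2_pairing 2 m))\<^sup>2 = 1 + m * (m + 1) * ((m + 1)\<^sup>2 + 5) / 4"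
  "(cmod (p2_pairing 3 m))\<^sup>2 = 1 + m * (m + 1) * (2 * (m + 1/2)\<^sup>2 + 9/2) / 4"
  "(cmod (p2_pairing 4 m))\<^sup>2 = 1 + ((m\<^sup>2 + 2*m)\<^sup>2 + 4 * (m + 1)\<^sup>2 + 5) / 2"
  unfolding p2_pairing_eq cmod_power2 by (simp_all add: power2_eq_square field_simps)

lemma norm_p2_pairing_eq_1_iff:
  assumes "r \<in> {1, 2, 3, 4}"
  shows "(cmod (p2_pairing r m))\<^sup>2 = 1 \<longleftrightarrow> (r = 1 \<and> (m = 0 \<or> m = 1)) \<or> (r \<in> {2, 3} \<and> (m = 0 \<or> m = -1))"
proof -
  have "0 \<le> (m - 1)\<^sup>2" "0 \<le> (m + 1)\<^sup>2" "0 \<le> (m + 1/2)\<^sup>2" "0 \<le> (m\<^sup>2 + 2*m)\<^sup>2"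
    by simp_all
  then have pos: "(m - 1)\<^sup>2 + 5 \<noteq> 0" "(m + 1)\<^sup>2 + 5 \<noteq> 0" "2 * (m + 1/2)\<^sup>2 + 9/2 \<noteq> 0"
    "(m\<^sup>2 + 2*m)\<^sup>2 + 4 * (m + 1)\<^sup>2 + 5 \<noteq> 0"
    by linarith+
  consider "r = 1" | "r = 2" | "r = 3" | "r = 4"
    using assms by blast
  then show ?thesis
  proof cases
    case 1
    show ?thesis
      using pos(1) unfolding 1 norm_p2_pairing_squared by auto
  next
    case 2
    show ?thesis
      using pos(2) unfolding 2 norm_p2_pairing_squared by auto
  next
    case 3
    show ?thesis
      using pos(3) unfolding 3 norm_p2_pairing_squared by auto
  next
    case 4
    show ?thesis
      using pos(4) unfolding 4 norm_p2_pairing_squared by auto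
  qed
qed

lemma norm_herm_p2_gamma_Qv:
  assumes "1 \<le> j"
  shows "(cmod (herm (lift p2) (gamma j *v Qv)))\<^sup>2 = 1 \<longleftrightarrow> j \<in> {1, 2, 3, 5, 10, 11}"
proof -
  define q a where "q = (j - 1) div 8" and "a = (j - 1) mod 8"
  have j: "j = 8*q + a + 1" "a < 8"
    using assms unfolding q_def a_def by simp_all
  have "(cmod (herm (lift p2) (gamma j *v Qv)))\<^sup>2 = 1 \<longleftrightarrow>
      (if a < 4 then (a = 0 \<and> q = 0) \<or> ((a = 1 \<or> a = 2) \<and> q \<le> 1) else a = 4 \<and> q = 0)"
  proof (cases "a < 4")
    case True
    then have "a + 1 \<in> {1, 2, 3, 4}"
      by auto
    then show ?thesis
      using True unfolding herm_p2_gamma_Qv q_def[symmetric] a_def[symmetric]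
      by (auto simp: norm_p2_pairing_eq_1_iff)
  next
    case False
    then have "a - 3 \<in> {1, 2, 3, 4}"
      using j(2) by auto
    then show ?thesis
      using False unfolding herm_p2_gamma_Qv q_def[symmetric] a_def[symmetric]
      by (auto simp: norm_p2_pairing_eq_1_iff)
  qed
  also have "\<dots> \<longleftrightarrow> j \<in> {1, 2, 3, 5, 10, 11}"
    using j(2) unfolding j(1) by (auto; presburger)
  finally show ?thesis .
qed

lemma bisector_p2_iff:
  assumes "1 \<le> j"
  shows "p2 \<in> bisector j \<longleftrightarrow> j \<in> {1, 2, 3, 5, 10, 11}"
  using p2_in_H2C norm_herm_p2_gamma_Qv[OF assms]
  by (simp add: bisector_def H2C_def fj_def herm_lift_Qv)

section \<open>Differentials of the bisector functions at \<open>p2\<close>\<close>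

lemma gamma_Qv_values:
  "gamma 1 *v Qv = vector [2, - (3 + sqrt_neg7) / 2, -1]"
  "gamma 2 *v Qv = vector [0, 0, -1]"
  "gamma 3 *v Qv = vector [1, -1, (-1 + sqrt_neg7) / 2]"
  "gamma 5 *v Qv = vector [1, - (1 + sqrt_neg7) / 2, -1]"
  "gamma 10 *v Qv = vector [(1 - sqrt_neg7) / 2, -1, -1]"
  "gamma 11 *v Qv = vector [(1 - sqrt_neg7) / 2, (-3 + sqrt_neg7) / 2, (-1 + sqrt_neg7) / 2]"
  by (simp_all add: gamma_Qv gamma_base_Qv G1_power_def mat3_vector_mult vector3_eq_iff field_simps
      sqrt_neg7_squared sqrt_neg7_squared_left)

lemma has_derivative_one_minus_norm_affine:
  "((\<lambda>w. 1 - (cmod (fst w * a + snd w * b + c))\<^sup>2) has_derivative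
     (\<lambda>h. - 2 * inner (fst p * a + snd p * b + c) (fst h * a + snd h * b))) (at p)"
  unfolding power2_norm_eq_inner
  by (auto intro!: derivative_eq_intros simp: inner_commute algebra_simps)

lemma df_eq_inner:
  assumes "v = gamma j *v Qv"
  shows "df j p h = - 2 * inner (herm (lift p) v) (fst h * cnj (v$3) + snd h * cnj (v$2))"
proof -
  have chart: "(\<lambda>w. fj j (lift w)) =
      (\<lambda>w. 1 - (cmod (fst w * cnj (v$3) + snd w * cnj (v$2) + cnj (v$1)))\<^sup>2)"
    by (simp add: fj_def herm_def lift_def Qv_def assms)
  have "df j p = (\<lambda>h. - 2 * inner (fst p * cnj (v$3) + snd p * cnj (v$2) + cnj (v$1))
      (fst h * cnj (v$3) + snd h * cnj (v$2)))"
    unfolding df_def chart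
    by (rule frechet_derivative_at[symmetric]) (rule has_derivative_one_minus_norm_affine)
  then show ?thesis
    by (simp add: herm_def lift_def)
qed

text \<open>A real frame of the chart \<open>\<complex>\<^sup>2 = \<real>\<^sup>4\<close>, with the imaginary directions scaled by
  \<open>1/\<surd>7\<close> so that all differentials at \<open>p2\<close> take rational values on it.\<close>
definition chart_frame :: "nat \<Rightarrow> complex \<times> complex" where
  "chart_frame k = (if k = 1 then (1, 0) else if k = 2 then (Complex 0 (1 / sqrt 7), 0)
     else if k = 3 then (0, 1) else (0, Complex 0 (1 / sqrt 7)))"

definition chart_coord :: "nat \<Rightarrow> complex \<times> complex \<Rightarrow> real" where
  "chart_coord k h = (if k = 1 then Re (fst h) else if k = 2 then sqrt 7 * Im (fst h)
     else if k = 3 then Re (snd h) else sqrt 7 * Im (snd h))"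

lemma df_chart_expansion: "df j p h = (\<Sum>k\<in>{1, 2, 3, 4}. chart_coord k h * df j p (chart_frame k))"
  by (simp add: df_eq_inner[OF refl] chart_coord_def chart_frame_def inner_complex_def field_simps)

lemma lin_indep_df_iff:
  "lin_indep_family (\<lambda>j. df j p) S \<longleftrightarrow>
    (\<forall>c. (\<forall>k\<in>{1, 2, 3, 4}. (\<Sum>j\<in>S. c j * df j p (chart_frame k)) = 0) \<longrightarrow> (\<forall>j\<in>S. c j = 0))"
  by (rule lin_indep_family_iff_frame) (rule df_chart_expansion)

lemma df_p2_chart_frame:
  "df 1 p2 (chart_frame 1) = 2"    "df 1 p2 (chart_frame 2) = 0"
  "df 1 p2 (chart_frame 3) = 3"    "df 1 p2 (chart_frame 4) = 1"
  "df 2 p2 (chart_frame 1) = 2"    "df 2 p2 (chart_frame 2) = 0"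
  "df 2 p2 (chart_frame 3) = 0"    "df 2 p2 (chart_frame 4) = 0"
  "df 3 p2 (chart_frame 1) = 5/2"  "df 3 p2 (chart_frame 2) = -1/2"
  "df 3 p2 (chart_frame 3) = 3/2"  "df 3 p2 (chart_frame 4) = 1/2"
  "df 5 p2 (chart_frame 1) = 3/2"  "df 5 p2 (chart_frame 2) = 1/2"
  "df 5 p2 (chart_frame 3) = -1"   "df 5 p2 (chart_frame 4) = 1"
  "df 10 p2 (chart_frame 1) = 3/2" "df 10 p2 (chart_frame 2) = 1/2"
  "df 10 p2 (chart_frame 3) = 3/2" "df 10 p2 (chart_frame 4) = 1/2"
  "df 11 p2 (chart_frame 1) = 5/2" "df 11 p2 (chart_frame 2) = -1/2"
  "df 11 p2 (chart_frame 3) = 4"   "df 11 p2 (chart_frame 4) = 0"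
  by (simp_all add: df_eq_inner[OF refl] gamma_Qv_values p2_def lift_def herm_vector3 chart_frame_def
      inner_complex_def field_simps del: One_nat_def)

section \<open>Transversality at \<open>p2\<close>\<close>

definition transverse_quadruples :: "nat set set" where
  "transverse_quadruples =
    {{1, 2, 3, 5}, {1, 2, 5, 10}, {1, 2, 10, 11}, {1, 2, 3, 11}, {1, 3, 5, 10}, {1, 3, 5, 11},
     {1, 3, 10, 11}, {1, 5, 10, 11}, {2, 3, 5, 10}, {2, 3, 5, 11}, {2, 3, 10, 11}, {2, 5, 10, 11}}"

lemma subset_card_4_cases:
  assumes "S \<subseteq> {1, 2, 3, 5, 10, 11}" "card S = 4"
  shows "S \<in> transverse_quadruples \<or> S \<in> {{1, 2, 3, 10}, {1, 2, 5, 11}, {3, 5, 10, 11}}"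
proof -
  have "S \<in> Pow {1, 2, 3, 5, 10, 11}"
    using assms(1) by simp
  then show ?thesis
    using assms(2) unfolding transverse_quadruples_def
    by (simp add: Pow_insert image_insert) (elim disjE; simp)
qed

lemma subset_card_2_3_transverse:
  assumes "S \<subseteq> {1, 2, 3, 5, 10, 11}" "card S = 2 \<or> card S = 3"
  shows "\<exists>E\<in>transverse_quadruples. S \<subseteq> E"
proof -
  have "S \<in> Pow {1, 2, 3, 5, 10, 11}"
    using assms(1) by simp
  then show ?thesis
    using assms(2) unfolding transverse_quadruples_def
    by (simp add: Pow_insert image_insert) (elim disjE; simp)
qed

lemma finite_transverse_quadruple: "S \<in> transverse_quadruples \<Longrightarrow> finite S"
  unfolding transverse_quadruples_def by auto

lemma transverse_quadruples_indep:
  assumes "S \<in> transverse_quadruples"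
  shows "lin_indep_family (\<lambda>j. df j p2) S"
  \<comment> \<open>\<open>One_nat_def\<close> would rewrite the index \<open>1\<close> to \<open>Suc 0\<close>, out of reach of the table\<close>
  using assms unfolding transverse_quadruples_def
  by (elim insertE emptyE; simp only: lin_indep_df_iff;
      simp add: df_p2_chart_frame del: One_nat_def)

lemma exceptional_quadruples_dep:
  assumes "S \<in> {{1, 2, 3, 10}, {1, 2, 5, 11}, {3, 5, 10, 11}}"
  shows "\<not> lin_indep_family (\<lambda>j. df j p2) S"
proof -
  have "\<exists>c. (\<forall>k\<in>{1, 2, 3, 4}. (\<Sum>j\<in>S. c j * df j p2 (chart_frame k)) = 0) \<and> (\<exists>j\<in>S. c j \<noteq> 0)"
    using assms
  proof (elim insertE emptyE)
    assume "S = {1, 2, 3, 10}"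
    then show ?thesis
      by (intro exI[of _ "\<lambda>j. if j \<in> {1, 2} then -1 else 1"])
        (simp add: df_p2_chart_frame del: One_nat_def)
  next
    assume "S = {1, 2, 5, 11}"
    then show ?thesis
      by (intro exI[of _ "\<lambda>j. if j \<in> {1, 2} then -1 else 1"])
        (simp add: df_p2_chart_frame del: One_nat_def)
  next
    assume "S = {3, 5, 10, 11}"
    then show ?thesis
      by (intro exI[of _ "\<lambda>j. if j \<in> {3, 10} then -1 else 1"])
        (simp add: df_p2_chart_frame del: One_nat_def)
  qed
  then show ?thesis
    unfolding lin_indep_df_iff by blast
qed

theorem proposition5p11:
  shows "(\<exists>!p. p \<in> H2C \<and> proj_fixed G2 p) \<and>
    (\<forall>p. p \<in> H2C \<and> proj_fixed G2 p \<longrightarrow>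
       {j::nat. 1 \<le> j \<and> p \<in> bisector j} = {1, 2, 3, 5, 10, 11} \<and>
       (\<forall>S. S \<subseteq> {1, 2, 3, 5, 10, 11} \<and> (card S = 2 \<or> card S = 3) \<longrightarrow>
            lin_indep_family (\<lambda>j. df j p) S) \<and>
       (\<forall>S. S \<subseteq> {1, 2, 3, 5, 10, 11} \<and> card S = 4 \<longrightarrow>
            (\<not> lin_indep_family (\<lambda>j. df j p) S \<longleftrightarrow>
             S \<in> {{1, 2, 3, 10}, {1, 2, 5, 11}, {3, 5, 10, 11}})))"
proof (intro conjI allI impI)
  show "\<exists>!p. p \<in> H2C \<and> proj_fixed G2 p"
    using p2_in_H2C p2_fixed proj_fixed_G2_H2C_unique by blast
next
  fix p
  assume "p \<in> H2C \<and> proj_fixed G2 p"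
  then have "p = p2"
    using proj_fixed_G2_H2C_unique by blast
  then show "{j::nat. 1 \<le> j \<and> p \<in> bisector j} = {1, 2, 3, 5, 10, 11}"
    using bisector_p2_iff by auto
next
  fix p and S :: "nat set"
  assume p: "p \<in> H2C \<and> proj_fixed G2 p"
    and S: "S \<subseteq> {1, 2, 3, 5, 10, 11} \<and> (card S = 2 \<or> card S = 3)"
  obtain E where "E \<in> transverse_quadruples" "S \<subseteq> E"
    using subset_card_2_3_transverse S by blast
  then show "lin_indep_family (\<lambda>j. df j p) S"
    using p proj_fixed_G2_H2C_unique transverse_quadruples_indep lin_indep_family_subset
      finite_transverse_quadruple
    by blast
next
  fix p and S :: "nat set"
  assume "p \<in> H2C \<and> proj_fixed G2 p" and "S \<subseteq> {1, 2, 3, 5, 10, 11} \<and> card S = 4"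
  then show "\<not> lin_indep_family (\<lambda>j. df j p) S \<longleftrightarrow>
      S \<in> {{1, 2, 3, 10}, {1, 2, 5, 11}, {3, 5, 10, 11}}"
    using proj_fixed_G2_H2C_unique subset_card_4_cases transverse_quadruples_indep
      exceptional_quadruples_dep
    by blast
qed

end
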